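(* Let $n\ge q\ge1$ be integers, $\lambda\in(0,1)$, and $r=\lceil n/q\rceil$. Then \[ \frac{r-(r-1)\lambda}{r} \;\ge\; \eta_\lambda(n,q) \;\ge\; \frac{r-(r-1)\lambda}{r+\lambda}. \] Furthermore, the graph $G$ on vertex set $[n]$ in which distinct $i,j$ are adjacent if and only if $i\equiv j \pmod r$ (so $G$ is a disjoint union of $r$ cliques and $\overline{P}(G;i)=\lceil i/r\rceil$) belongs to $\mathcal{G}_{n,q}$ and satisfies $\gamma_\lambda(G)\ge\frac{r-(r-1)\lambda}{r+\lambda}$.
   Context: For a finite base set $S$ and $f:2^S\to\mathbb{R}_{\ge0}$, write $f(A\mid B)=f(A\cup B)-f(B)$. $f$ is normalized if $f(\emptyset)=0$, monotone if $f(\{e\}\mid A)\ge0$ for all $e,A$, submodular if $f(\{e\}\mid A)\ge f(\{e\}\mid B)$ for $A\subseteq B\subseteq S$, $e\in S\setminus B$. Such $f$ has total curvature $\lambda\in(0,1)$ if $f(\{e\}\mid A)\ge(1-\lambda)f(\{e\})$ for all $e\in S$ and $A\subseteq S\setminus\{e\}$; $\mathcal{F}_\lambda$ is the set of normalized, monotone, submodular functions with total curvature $\lambda$. There are $n$ agents $[n]$ with decision sets $X_i\subseteq S$ forming a partition of $S$; action profiles $x\in X=X_1\times\cdots\times X_n$ are valued by $f(x)=f(\{x_1,\dots,x_n\})$, and $x_M=\{x_i:i\in M\}$. Let $x^{\mathrm{opt}}\in\arg\max_{x\in X}f(x)$. Given an undirected graph $G=([n],E)$ (information graph), let $\mathcal{N}_i=\{j<i:(j,i)\in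 E\}$. The generalized greedy algorithm produces $x^{\mathrm{sol}}$ with $x^{\mathrm{sol}}_i\in\arg\max_{x_i\in X_i}f(x_i\mid x^{\mathrm{sol}}_{\mathcal{N}_i})$, taking the worst among all possible greedy outcomes. Define $\gamma(f,X,G)=f(x^{\mathrm{sol}})/f(x^{\mathrm{opt}})$ and $\gamma_\lambda(G)=\inf_{f\in\mathcal{F}_\lambda,X}\gamma(f,X,G)$. Define recursively $\overline{P}(G;i)=1$ if $\mathcal{N}_i=\emptyset$ and $\overline{P}(G;i)=1+\max_{j\in\mathcal{N}_i}\overline{P}(G;j)$ otherwise; let $\mathcal{G}_{n,q}$ be the set of graphs on $[n]$ with $\max_i\overline{P}(G;i)\le q$, and $\eta_\lambda(n,q)=\sup_{G\in\mathcal{G}_{n,q}}\gamma_\lambda(G)$. *)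

theory Defs
  imports Complex_Main "HOL-Library.FuncSet"
begin

definition marg :: "(nat set \<Rightarrow> real) \<Rightarrow> nat set \<Rightarrow> nat set \<Rightarrow> real" where
  "marg f A B = f (A \<union> B) - f B"

definition in_F :: "real \<Rightarrow> nat set \<Rightarrow> (nat set \<Rightarrow> real) \<Rightarrow> bool" where
  "in_F lam S f \<longleftrightarrow>
     (\<forall>A. A \<subseteq> S \<longrightarrow> f A \<ge> 0) \<and>
     f {} = 0 \<and>
     (\<forall>e A. e \<in> S \<and> A \<subseteq> S \<longrightarrow> marg f {e} A \<ge> 0) \<and>
     (\<forall>e A B. A \<subseteq> B \<and> B \<subseteq> S \<and> e \<in> S - B \<longrightarrow> marg f {e} A \<ge> marg f {e} B) \<and>
     (\<forall>e A. e \<in> S \<and> A \<subseteq> S - {e} \<longrightarrow> marg f {e} A \<ge> (1 - lam) * f {e})"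

definition is_partition :: "nat \<Rightarrow> nat set \<Rightarrow> (nat \<Rightarrow> nat set) \<Rightarrow> bool" where
  "is_partition n S X \<longleftrightarrow>
     (\<forall>i\<in>{1..n}. X i \<noteq> {}) \<and>
     (\<forall>i\<in>{1..n}. \<forall>j\<in>{1..n}. i \<noteq> j \<longrightarrow> X i \<inter> X j = {}) \<and>
     (\<Union>i\<in>{1..n}. X i) = S"

definition is_graph :: "nat \<Rightarrow> (nat \<Rightarrow> nat \<Rightarrow> bool) \<Rightarrow> bool" where
  "is_graph n E \<longleftrightarrow> (\<forall>i j. E i j \<longrightarrow> E j i) \<and> (\<forall>i. \<not> E i i) \<and>
     (\<forall>i j. E i j \<longrightarrow> i \<in> {1..n} \<and> j \<in> {1..n})"

definition nbrs :: "(nat \<Rightarrow> nat \<Rightarrow> bool) \<Rightarrow> nat \<Rightarrow> nat set" where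
  "nbrs E i = {j. j < i \<and> E j i}"

function Pbar :: "(nat \<Rightarrow> nat \<Rightarrow> bool) \<Rightarrow> nat \<Rightarrow> nat" where
  "Pbar E i = (if {j. j < i \<and> E j i} = {} then 1
               else 1 + Max ((\<lambda>j. Pbar E j) ` {j. j < i \<and> E j i}))"
  by pat_completeness auto
termination by (relation "measure snd") auto

definition profiles :: "nat \<Rightarrow> (nat \<Rightarrow> nat set) \<Rightarrow> (nat \<Rightarrow> nat) set" where
  "profiles n X = PiE {1..n} X"

definition fval :: "(nat set \<Rightarrow> real) \<Rightarrow> nat \<Rightarrow> (nat \<Rightarrow> nat) \<Rightarrow> real" where
  "fval f n x = f (x ` {1..n})"

definition opt_val :: "nat \<Rightarrow> (nat set \<Rightarrow> real) \<Rightarrow> (nat \<Rightarrow> nat set) \<Rightarrow> real" where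
  "opt_val n f X = Max (fval f n ` profiles n X)"

text \<open>All possible outcomes of the generalized greedy algorithm (any tie-breaking).\<close>
definition greedy_outcomes ::
  "nat \<Rightarrow> (nat set \<Rightarrow> real) \<Rightarrow> (nat \<Rightarrow> nat set) \<Rightarrow> (nat \<Rightarrow> nat \<Rightarrow> bool) \<Rightarrow> (nat \<Rightarrow> nat) set" where
  "greedy_outcomes n f X E =
     {x \<in> profiles n X. \<forall>i\<in>{1..n}. \<forall>y\<in>X i.
        marg f {y} (x ` nbrs E i) \<le> marg f {x i} (x ` nbrs E i)}"

definition gamma ::
  "nat \<Rightarrow> (nat set \<Rightarrow> real) \<Rightarrow> (nat \<Rightarrow> nat set) \<Rightarrow> (nat \<Rightarrow> nat \<Rightarrow> bool) \<Rightarrow> real" where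
  "gamma n f X E = Inf ((\<lambda>x. fval f n x / opt_val n f X) ` greedy_outcomes n f X E)"

text \<open>gamma_lambda(G): infimum over all instances (finite S, f in F_lambda, partition X);
  instances with f(x_opt) = 0 (where the ratio is undefined) are excluded.\<close>
definition gamma_lam :: "real \<Rightarrow> nat \<Rightarrow> (nat \<Rightarrow> nat \<Rightarrow> bool) \<Rightarrow> real" where
  "gamma_lam lam n E = Inf {gamma n f X E | S f X.
      finite S \<and> in_F lam S f \<and> is_partition n S X \<and> opt_val n f X > 0}"

definition graphs_nq :: "nat \<Rightarrow> nat \<Rightarrow> (nat \<Rightarrow> nat \<Rightarrow> bool) set" where
  "graphs_nq n q = {E. is_graph n E \<and> (\<forall>i\<in>{1..n}. Pbar E i \<le> q)}"

definition eta :: "real \<Rightarrow> nat \<Rightarrow> nat \<Rightarrow> real" where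
  "eta lam n q = Sup (gamma_lam lam n ` graphs_nq n q)"

end

theory Submission
  imports Defs
begin

text \<open>
  Let \<open>x\<close> be a greedy outcome, \<open>p\<close> an optimal profile and \<open>a\<^sub>i\<close> the
  marginal gain of agent \<open>i\<close> at its turn. Submodularity and the greedy choices bound what
  \<open>p\<close> adds to \<open>x\<close> by \<open>D\<close>, the sum of the \<open>a\<^sub>i\<close> over the agents with
  \<open>x\<^sub>i \<noteq> p\<^sub>i\<close>, while the curvature forces \<open>x\<close> to add at least \<open>(1 - \<lambda>) D\<close>
  to \<open>p\<close>; hence \<open>f(p) \<le> f(x) + \<lambda> \<Sum> a\<^sub>i\<close>. In the residue-class graph every class is
  a clique that sees all its earlier members, so \<open>f(x)\<close> is at least the sum of the gains of
  one class plus \<open>1 - \<lambda>\<close> times the others; averaging over the \<open>r\<close> classes gives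
  \<open>r f(x) \<ge> (r - (r - 1) \<lambda>) \<Sum> a\<^sub>i\<close>, and the two estimates combine to the ratio
  \<open>(r - (r - 1) \<lambda>) / (r + \<lambda>)\<close>.

  Vertices of equal depth \<open>Pbar\<close> are pairwise non-adjacent, so by pigeonhole
  every graph of depth at most \<open>q\<close> has an independent set \<open>I\<close> of \<open>r\<close> agents. Offer
  each of them a shared and a private element, where \<open>m\<close> shared elements are worth
  \<open>1 + (1 - \<lambda>)(m - 1)\<close> and private ones \<open>1\<close> each. As no agent of \<open>I\<close> sees
  another, all of them may greedily take the shared element, which yields \<open>r - (r - 1) \<lambda>\<close>
  against an optimum of \<open>r\<close>.
\<close>

section \<open>Set functions of bounded curvature\<close>

lemma marg_singleton_mem: "e \<in> A \<Longrightarrow> marg f {e} A = 0"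
  by (simp add: marg_def insert_absorb)

lemma in_F_nonneg: "in_F lam S f \<Longrightarrow> A \<subseteq> S \<Longrightarrow> 0 \<le> f A"
  by (simp add: in_F_def)

lemma in_F_empty: "in_F lam S f \<Longrightarrow> f {} = 0"
  by (simp add: in_F_def)

lemma in_F_marg_nonneg: "in_F lam S f \<Longrightarrow> e \<in> S \<Longrightarrow> A \<subseteq> S \<Longrightarrow> 0 \<le> marg f {e} A"
  by (simp add: in_F_def)

lemma in_F_marg_antimono:
  assumes "in_F lam S f" "e \<in> S" "A \<subseteq> B" "B \<subseteq> S"
  shows "marg f {e} B \<le> marg f {e} A"
proof (cases "e \<in> B")
  case True
  then show ?thesis
    using assms in_F_marg_nonneg[of lam S f e A] by (simp add: marg_singleton_mem)
next
  case False
  then show ?thesis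
    using assms unfolding in_F_def by blast
qed

lemma in_F_marg_le_singleton:
  "in_F lam S f \<Longrightarrow> e \<in> S \<Longrightarrow> A \<subseteq> S \<Longrightarrow> marg f {e} A \<le> f {e}"
  using in_F_marg_antimono[of lam S f e "{}" A] by (simp add: marg_def in_F_empty)

lemma in_F_marg_curvature:
  assumes "in_F lam S f" "e \<in> S" "A \<subseteq> S" "e \<notin> A"
  shows "(1 - lam) * f {e} \<le> marg f {e} A"
proof -
  have "A \<subseteq> S - {e}"
    using assms(3,4) by blast
  then show ?thesis
    using assms(1,2) unfolding in_F_def by blast
qed

lemma marg_telescope:
  fixes x :: "'a::linorder \<Rightarrow> nat"
  assumes "finite T"
  shows "f (B \<union> x ` T) - f B = (\<Sum>i\<in>T. marg f {x i} (B \<union> x ` (T \<inter> {..<i})))"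
  using assms
proof (induction T rule: finite_linorder_max_induct)
  case empty
  then show ?case by simp
next
  case (insert b T)
  have "(\<Sum>i\<in>insert b T. marg f {x i} (B \<union> x ` (insert b T \<inter> {..<i})))
      = marg f {x b} (B \<union> x ` T) + (\<Sum>i\<in>T. marg f {x i} (B \<union> x ` (T \<inter> {..<i})))"
  proof -
    have "b \<notin> T" and "insert b T \<inter> {..<b} = T"
      using insert.hyps by auto
    moreover have "insert b T \<inter> {..<i} = T \<inter> {..<i}" if "i \<in> T" for i
      using insert.hyps that by auto
    ultimately show ?thesis
      using insert.hyps(1) by (simp cong: sum.cong)
  qed
  moreover have "B \<union> x ` insert b T = {x b} \<union> (B \<union> x ` T)"
    by auto
  ultimately show ?case
    using insert.IH by (simp add: marg_def)
qed

lemma partition_block_subset: "is_partition n S X \<Longrightarrow> i \<in> {1..n} \<Longrightarrow> X i \<subseteq> S"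
  unfolding is_partition_def by blast

lemma partition_block_unique:
  assumes "is_partition n S X" "i \<in> {1..n}" "j \<in> {1..n}" "e \<in> X i" "e \<in> X j"
  shows "i = j"
  using assms unfolding is_partition_def by (metis disjoint_iff)

lemma profile_mem: "p \<in> profiles n X \<Longrightarrow> i \<in> {1..n} \<Longrightarrow> p i \<in> X i"
  unfolding profiles_def by blast

lemma profile_image_subset:
  "is_partition n S X \<Longrightarrow> p \<in> profiles n X \<Longrightarrow> A \<subseteq> {1..n} \<Longrightarrow> p ` A \<subseteq> S"
  using partition_block_subset profile_mem by blast

lemma profiles_block_unique:
  assumes "is_partition n S X" "p \<in> profiles n X" "p' \<in> profiles n X"
    and "i \<in> {1..n}" "j \<in> {1..n}" "p i = p' j"
  shows "i = j"
  using assms partition_block_unique profile_mem by metis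

lemma finite_profiles:
  assumes "finite S" "is_partition n S X"
  shows "finite (profiles n X)"
proof -
  have "finite (X i)" if "i \<in> {1..n}" for i
    using assms partition_block_subset that finite_subset by metis
  then show ?thesis
    unfolding profiles_def by (intro finite_PiE) auto
qed

lemma profiles_nonempty: "is_partition n S X \<Longrightarrow> profiles n X \<noteq> {}"
  unfolding profiles_def is_partition_def by (simp add: PiE_eq_empty_iff)

lemma fval_nonneg:
  assumes "in_F lam S f" "is_partition n S X" "p \<in> profiles n X"
  shows "0 \<le> fval f n p"
  unfolding fval_def using assms(1) profile_image_subset[OF assms(2,3) order_refl] by (rule in_F_nonneg)

lemma fval_le_opt_val:
  assumes "finite S" "is_partition n S X" "p \<in> profiles n X"
  shows "fval f n p \<le> opt_val n f X"
  unfolding opt_val_def using finite_profiles[OF assms(1,2)] assms(3) by simp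

lemma opt_val_attained:
  assumes "finite S" "is_partition n S X"
  obtains p where "p \<in> profiles n X" "fval f n p = opt_val n f X"
proof -
  have "opt_val n f X \<in> fval f n ` profiles n X"
    unfolding opt_val_def using finite_profiles[OF assms] profiles_nonempty[OF assms(2)]
    by (intro Max_in finite_imageI) simp_all
  then show ?thesis
    using that by force
qed

lemma greedy_outcomes_subset_profiles: "greedy_outcomes n f X E \<subseteq> profiles n X"
  unfolding greedy_outcomes_def by blast

lemma greedy_outcomes_nonempty:
  assumes S: "finite S" and P: "is_partition n S X"
  shows "greedy_outcomes n f X E \<noteq> {}"
proof -
  have "\<exists>x \<in> PiE {1..m} X. \<forall>i\<in>{1..m}. \<forall>y\<in>X i.
          marg f {y} (x ` nbrs E i) \<le> marg f {x i} (x ` nbrs E i)" if "m \<le> n" for m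
    using that
  proof (induction m)
    case 0
    then show ?case by simp
  next
    case (Suc m)
    then obtain x where x: "x \<in> PiE {1..m} X"
      and x_greedy: "\<forall>i\<in>{1..m}. \<forall>y\<in>X i. marg f {y} (x ` nbrs E i) \<le> marg f {x i} (x ` nbrs E i)"
      by auto
    let ?gain = "\<lambda>y. marg f {y} (x ` nbrs E (Suc m))"
    have m: "Suc m \<in> {1..n}"
      using Suc.prems by simp
    have fin: "finite (X (Suc m))"
      using partition_block_subset[OF P m] S finite_subset by blast
    moreover have "X (Suc m) \<noteq> {}"
      using P m unfolding is_partition_def by blast
    ultimately obtain z where z: "z \<in> X (Suc m)" and z_Max: "Max (?gain ` X (Suc m)) = ?gain z"
      by (rule obtains_MAX)
    have z_max: "?gain y \<le> ?gain z" if "y \<in> X (Suc m)" for y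
      unfolding z_Max[symmetric] using fin that by simp
    define x' where "x' = x(Suc m := z)"
    have same_past: "x' ` nbrs E i = x ` nbrs E i" if "i \<le> Suc m" for i
      using that unfolding x'_def nbrs_def by auto
    have "x' \<in> PiE {1..Suc m} X"
      using PiE_fun_upd[OF z x] atLeastAtMostSuc_conv[of 1 m] unfolding x'_def by simp
    moreover have "marg f {y} (x' ` nbrs E i) \<le> marg f {x' i} (x' ` nbrs E i)"
      if i: "i \<in> {1..Suc m}" and y: "y \<in> X i" for i y
    proof (cases "i = Suc m")
      case True
      then show ?thesis
        using z_max y same_past[of i] unfolding x'_def by simp
    next
      case False
      then show ?thesis
        using x_greedy i y same_past[of i] unfolding x'_def by simp
    qed
    ultimately show ?case
      by blast
  qed
  from this[of n] show ?thesis
    unfolding greedy_outcomes_def profiles_def by auto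
qed

lemma gamma_ge:
  assumes "finite S" "is_partition n S X" "0 < opt_val n f X"
    and "\<And>x. x \<in> greedy_outcomes n f X E \<Longrightarrow> c * opt_val n f X \<le> fval f n x"
  shows "c \<le> gamma n f X E"
  unfolding gamma_def
proof (rule cInf_greatest)
  show "(\<lambda>x. fval f n x / opt_val n f X) ` greedy_outcomes n f X E \<noteq> {}"
    using greedy_outcomes_nonempty[OF assms(1,2)] by blast
qed (use assms(3,4) in \<open>auto simp: pos_le_divide_eq\<close>)

lemma gamma_nonneg:
  assumes "finite S" "in_F lam S f" "is_partition n S X" "0 < opt_val n f X"
  shows "0 \<le> gamma n f X E"
  using fval_nonneg[OF assms(2,3) subsetD[OF greedy_outcomes_subset_profiles]]
  by (intro gamma_ge[OF assms(1,3,4)]) simp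

lemma gamma_le:
  assumes "finite S" "in_F lam S f" "is_partition n S X" "0 < opt_val n f X"
    and "x \<in> greedy_outcomes n f X E"
  shows "gamma n f X E \<le> fval f n x / opt_val n f X"
  unfolding gamma_def
proof (rule cInf_lower)
  show "bdd_below ((\<lambda>x. fval f n x / opt_val n f X) ` greedy_outcomes n f X E)"
    using assms(4) fval_nonneg[OF assms(2,3) subsetD[OF greedy_outcomes_subset_profiles]]
    by (intro bdd_belowI[of _ 0]) auto
qed (use assms(5) in blast)

lemma gamma_lam_le:
  assumes "finite S" "in_F lam S f" "is_partition n S X" "0 < opt_val n f X"
  shows "gamma_lam lam n E \<le> gamma n f X E"
  unfolding gamma_lam_def
  by (rule cInf_lower) (use assms gamma_nonneg in \<open>blast, auto intro: bdd_belowI[of _ 0]\<close>)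

lemma gamma_lam_ge:
  assumes "finite S" "in_F lam S f" "is_partition n S X" "0 < opt_val n f X"
    and "\<And>S f X. finite S \<Longrightarrow> in_F lam S f \<Longrightarrow> is_partition n S X \<Longrightarrow> 0 < opt_val n f X
           \<Longrightarrow> c \<le> gamma n f X E"
  shows "c \<le> gamma_lam lam n E"
  unfolding gamma_lam_def by (rule cInf_greatest) (use assms in blast)+

section \<open>A greedy outcome against an arbitrary profile\<close>

locale greedy_run =
  fixes lam :: real and S :: "nat set" and f :: "nat set \<Rightarrow> real" and n :: nat
    and X :: "nat \<Rightarrow> nat set" and E :: "nat \<Rightarrow> nat \<Rightarrow> bool" and x :: "nat \<Rightarrow> nat"
  assumes in_F: "in_F lam S f" and lam_nonneg: "0 \<le> lam" and lam_le_1: "lam \<le> 1"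
    and partition: "is_partition n S X" and graph: "is_graph n E"
    and greedy: "x \<in> greedy_outcomes n f X E"
begin

definition gain :: "nat \<Rightarrow> real" where
  "gain i = marg f {x i} (x ` nbrs E i)"

lemma x_profile: "x \<in> profiles n X"
  using greedy greedy_outcomes_subset_profiles by blast

lemma x_in_S: "i \<in> {1..n} \<Longrightarrow> x i \<in> S"
  using profile_image_subset[OF partition x_profile, of "{i}"] by simp

lemma nbrs_subset: "nbrs E i \<subseteq> {1..n}"
  using graph unfolding is_graph_def nbrs_def by blast

lemma greedy_choice: "i \<in> {1..n} \<Longrightarrow> y \<in> X i \<Longrightarrow> marg f {y} (x ` nbrs E i) \<le> gain i"
  using greedy unfolding greedy_outcomes_def gain_def by blast

lemma gain_nonneg: "i \<in> {1..n} \<Longrightarrow> 0 \<le> gain i"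
  unfolding gain_def
  using in_F_marg_nonneg[OF in_F x_in_S profile_image_subset[OF partition x_profile nbrs_subset]] .

lemma curvature_gain:
  assumes "i \<in> {1..n}" "A \<subseteq> S" "x i \<notin> A"
  shows "(1 - lam) * gain i \<le> marg f {x i} A"
proof -
  have "gain i \<le> f {x i}"
    unfolding gain_def using assms(1)
    by (intro in_F_marg_le_singleton[OF in_F x_in_S] profile_image_subset[OF partition x_profile nbrs_subset])
  then have "(1 - lam) * gain i \<le> (1 - lam) * f {x i}"
    using lam_le_1 by (intro mult_left_mono) auto
  also have "\<dots> \<le> marg f {x i} A"
    using assms by (intro in_F_marg_curvature[OF in_F x_in_S])
  finally show ?thesis .
qed

text \<open>Only agents that deviate from \<open>p\<close> contribute: when adding \<open>p i \<noteq> x i\<close> to the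
  greedy solution, submodularity lets us shrink the context to the set that agent \<open>i\<close>
  saw, where its greedy choice was at least as good.\<close>
lemma adding_profile_le:
  assumes p: "p \<in> profiles n X"
  shows "f (x ` {1..n} \<union> p ` {1..n}) - f (x ` {1..n})
           \<le> (\<Sum>i\<in>{1..n}. if x i = p i then 0 else gain i)"
proof -
  have sol: "x ` {1..n} \<subseteq> S"
    by (rule profile_image_subset[OF partition x_profile]) simp
  have "f (x ` {1..n} \<union> p ` {1..n}) - f (x ` {1..n})
          = (\<Sum>i\<in>{1..n}. marg f {p i} (x ` {1..n} \<union> p ` ({1..n} \<inter> {..<i})))"
    by (rule marg_telescope) simp
  also have "\<dots> \<le> (\<Sum>i\<in>{1..n}. if x i = p i then 0 else gain i)"
  proof (rule sum_mono)
    fix i :: nat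
    assume i: "i \<in> {1..n}"
    have p_i: "p i \<in> S"
      using profile_image_subset[OF partition p, of "{i}"] i by simp
    have "marg f {p i} (x ` {1..n} \<union> p ` ({1..n} \<inter> {..<i})) \<le> marg f {p i} (x ` {1..n})"
      using sol profile_image_subset[OF partition p] by (intro in_F_marg_antimono[OF in_F p_i]) auto
    also have "\<dots> \<le> (if x i = p i then 0 else gain i)"
    proof (cases "x i = p i")
      case True
      with i have "p i \<in> x ` {1..n}"
        by (metis imageI)
      then show ?thesis
        using True by (simp add: marg_singleton_mem)
    next
      case False
      have "marg f {p i} (x ` {1..n}) \<le> marg f {p i} (x ` nbrs E i)"
        using sol nbrs_subset[of i] by (intro in_F_marg_antimono[OF in_F p_i] image_mono)
      also have "\<dots> \<le> gain i"
        using i profile_mem[OF p i] by (rule greedy_choice)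
      finally show ?thesis
        using False by simp
    qed
    finally show "marg f {p i} (x ` {1..n} \<union> p ` ({1..n} \<inter> {..<i}))
                    \<le> (if x i = p i then 0 else gain i)" .
  qed
  finally show ?thesis .
qed

lemma adding_greedy_ge:
  assumes p: "p \<in> profiles n X"
  shows "(1 - lam) * (\<Sum>i\<in>{1..n}. if x i = p i then 0 else gain i)
           \<le> f (p ` {1..n} \<union> x ` {1..n}) - f (p ` {1..n})"
proof -
  have "(1 - lam) * (\<Sum>i\<in>{1..n}. if x i = p i then 0 else gain i)
          = (\<Sum>i\<in>{1..n}. (1 - lam) * (if x i = p i then 0 else gain i))"
    by (simp add: sum_distrib_left)
  also have "\<dots> \<le> (\<Sum>i\<in>{1..n}. marg f {x i} (p ` {1..n} \<union> x ` ({1..n} \<inter> {..<i})))"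
  proof (rule sum_mono)
    fix i :: nat
    assume i: "i \<in> {1..n}"
    have ctx: "p ` {1..n} \<union> x ` ({1..n} \<inter> {..<i}) \<subseteq> S"
      using profile_image_subset[OF partition p] profile_image_subset[OF partition x_profile] by auto
    show "(1 - lam) * (if x i = p i then 0 else gain i)
            \<le> marg f {x i} (p ` {1..n} \<union> x ` ({1..n} \<inter> {..<i}))"
    proof (cases "x i = p i")
      case True
      then show ?thesis
        using in_F_marg_nonneg[OF in_F x_in_S[OF i] ctx] by simp
    next
      case False
      have "x i \<notin> p ` {1..n}"
        using False i profiles_block_unique[OF partition x_profile p] by blast
      moreover have "x i \<notin> x ` ({1..n} \<inter> {..<i})"
        using i profiles_block_unique[OF partition x_profile x_profile] by fastforce
      ultimately have "x i \<notin> p ` {1..n} \<union> x ` ({1..n} \<inter> {..<i})"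
        by blast
      then show ?thesis
        using False curvature_gain[OF i ctx] by simp
    qed
  qed
  also have "\<dots> = f (p ` {1..n} \<union> x ` {1..n}) - f (p ` {1..n})"
    by (rule marg_telescope[symmetric]) simp
  finally show ?thesis .
qed

lemma opt_le_greedy_plus_gains:
  assumes p: "p \<in> profiles n X"
  shows "fval f n p \<le> fval f n x + lam * (\<Sum>i\<in>{1..n}. gain i)"
proof -
  define D where "D = (\<Sum>i\<in>{1..n}. if x i = p i then 0 else gain i)"
  have "f (p ` {1..n}) \<le> f (x ` {1..n}) + lam * D"
    using adding_profile_le[OF p] adding_greedy_ge[OF p] unfolding D_def
    by (simp add: Un_commute algebra_simps)
  moreover have "D \<le> (\<Sum>i\<in>{1..n}. gain i)"
    unfolding D_def by (intro sum_mono) (simp add: gain_nonneg)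
  ultimately show ?thesis
    unfolding fval_def using lam_nonneg by (smt (verit) mult_left_mono)
qed

text \<open>Telescope first over \<open>C\<close>, whose members see exactly the earlier members of \<open>C\<close>, and
  then over the remaining agents, each of which still adds \<open>(1 - lam)\<close> times its gain by
  curvature.\<close>
lemma greedy_ge_closed_gains:
  assumes C: "C \<subseteq> {1..n}" and closed: "\<And>i. i \<in> C \<Longrightarrow> nbrs E i = C \<inter> {..<i}"
  shows "(\<Sum>i\<in>C. gain i) + (1 - lam) * (\<Sum>i\<in>{1..n} - C. gain i) \<le> fval f n x"
proof -
  have fin: "finite C" "finite ({1..n} - C)"
    using finite_subset[OF C] by simp_all
  have "f (x ` C) = f ({} \<union> x ` C) - f {}"
    by (simp add: in_F_empty[OF in_F])
  also have "\<dots> = (\<Sum>i\<in>C. marg f {x i} ({} \<union> x ` (C \<inter> {..<i})))"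
    by (rule marg_telescope[OF fin(1)])
  also have "\<dots> = (\<Sum>i\<in>C. gain i)"
    by (rule sum.cong) (simp_all add: gain_def closed)
  finally have inside: "f (x ` C) = (\<Sum>i\<in>C. gain i)" .
  have "(1 - lam) * (\<Sum>i\<in>{1..n} - C. gain i) = (\<Sum>i\<in>{1..n} - C. (1 - lam) * gain i)"
    by (simp add: sum_distrib_left)
  also have "\<dots> \<le> (\<Sum>i\<in>{1..n} - C. marg f {x i} (x ` C \<union> x ` (({1..n} - C) \<inter> {..<i})))"
  proof (rule sum_mono)
    fix i
    assume i: "i \<in> {1..n} - C"
    have "x i \<notin> x ` C \<union> x ` (({1..n} - C) \<inter> {..<i})"
    proof
      assume "x i \<in> x ` C \<union> x ` (({1..n} - C) \<inter> {..<i})"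
      then obtain j where "j \<in> C \<or> j \<in> ({1..n} - C) \<inter> {..<i}" and "x i = x j"
        by blast
      moreover from this have "j \<in> {1..n}"
        using C by blast
      ultimately show False
        using i profiles_block_unique[OF partition x_profile x_profile, of i j] by auto
    qed
    moreover have "x ` C \<union> x ` (({1..n} - C) \<inter> {..<i}) \<subseteq> S"
      using C by (intro Un_least profile_image_subset[OF partition x_profile]) auto
    ultimately show "(1 - lam) * gain i \<le> marg f {x i} (x ` C \<union> x ` (({1..n} - C) \<inter> {..<i}))"
      using i curvature_gain by blast
  qed
  also have "\<dots> = f (x ` C \<union> x ` ({1..n} - C)) - f (x ` C)"
    by (rule marg_telescope[OF fin(2), symmetric])
  also have "x ` C \<union> x ` ({1..n} - C) = x ` {1..n}"
    using C by auto
  finally show ?thesis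
    using inside unfolding fval_def by simp
qed

end

section \<open>Lower bound for the residue-class graph\<close>

definition residue_graph :: "nat \<Rightarrow> nat \<Rightarrow> nat \<Rightarrow> nat \<Rightarrow> bool" where
  "residue_graph n r i j \<longleftrightarrow> i \<in> {1..n} \<and> j \<in> {1..n} \<and> i \<noteq> j \<and> i mod r = j mod r"

lemma is_graph_residue_graph: "is_graph n (residue_graph n r)"
  unfolding is_graph_def residue_graph_def by auto

lemma nbrs_residue_graph:
  "i \<in> {1..n} \<Longrightarrow> nbrs (residue_graph n r) i = {j. 1 \<le> j \<and> j < i \<and> j mod r = i mod r}"
  unfolding nbrs_def residue_graph_def by auto

lemma (in greedy_run) residue_graph_approximation:
  assumes E: "E = residue_graph n r" and r: "1 \<le> r" and p: "p \<in> profiles n X"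
  shows "(real r - (real r - 1) * lam) * fval f n p \<le> (real r + lam) * fval f n x"
proof -
  define A where "A = (\<Sum>i\<in>{1..n}. gain i)"
  define C where "C k = {i \<in> {1..n}. i mod r = k}" for k
  have class_bound: "(\<Sum>i\<in>C k. gain i) + (1 - lam) * (A - (\<Sum>i\<in>C k. gain i)) \<le> fval f n x" for k
  proof -
    have "C k \<subseteq> {1..n}"
      unfolding C_def by blast
    moreover have "nbrs E i = C k \<inter> {..<i}" if "i \<in> C k" for i
    proof -
      from that have i: "i \<in> {1..n}" "i mod r = k"
        unfolding C_def by auto
      show ?thesis
        unfolding E nbrs_residue_graph[OF i(1)] C_def using i by auto
    qed
    ultimately show ?thesis
      using greedy_ge_closed_gains[of "C k"] unfolding A_def by (simp add: sum_diff)
  qed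
  have "(\<Sum>k<r. \<Sum>i\<in>C k. gain i) = A"
    unfolding A_def C_def using r by (intro sum.group) auto
  then have "(real r - (real r - 1) * lam) * A
               = (\<Sum>k<r. (\<Sum>i\<in>C k. gain i) + (1 - lam) * (A - (\<Sum>i\<in>C k. gain i)))"
    by (simp add: sum.distrib sum_subtractf flip: sum_distrib_left) (simp add: algebra_simps)
  also have "\<dots> \<le> real r * fval f n x"
    using sum_mono[of "{..<r}", OF class_bound] by simp
  finally have sol: "(real r - (real r - 1) * lam) * A \<le> real r * fval f n x" .
  have factor_nonneg: "0 \<le> real r - (real r - 1) * lam"
    using r lam_le_1 mult_left_mono[of lam 1 "real r - 1"] by simp
  have "(real r - (real r - 1) * lam) * fval f n p
          \<le> (real r - (real r - 1) * lam) * (fval f n x + lam * A)"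
    using opt_le_greedy_plus_gains[OF p] factor_nonneg unfolding A_def by (rule mult_left_mono)
  also have "\<dots> \<le> (real r - (real r - 1) * lam) * fval f n x + lam * (real r * fval f n x)"
    using mult_left_mono[OF sol lam_nonneg] by (simp add: algebra_simps)
  finally show ?thesis
    by (simp add: algebra_simps)
qed

lemma gamma_residue_graph_ge:
  assumes r: "1 \<le> r" and lam: "0 \<le> lam" "lam \<le> 1"
    and S: "finite S" and F: "in_F lam S f" and P: "is_partition n S X" and opt: "0 < opt_val n f X"
  shows "(real r - (real r - 1) * lam) / (real r + lam) \<le> gamma n f X (residue_graph n r)"
proof (rule gamma_ge[OF S P opt])
  fix x
  assume x: "x \<in> greedy_outcomes n f X (residue_graph n r)"
  obtain p where p: "p \<in> profiles n X" "fval f n p = opt_val n f X"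
    using opt_val_attained[OF S P] .
  interpret greedy_run lam S f n X "residue_graph n r" x
    using F lam P is_graph_residue_graph x by unfold_locales
  have "(real r - (real r - 1) * lam) * opt_val n f X \<le> (real r + lam) * fval f n x"
    using residue_graph_approximation[OF refl r p(1)] p(2) by simp
  moreover have "0 < real r + lam"
    using r lam by simp
  ultimately show "(real r - (real r - 1) * lam) / (real r + lam) * opt_val n f X \<le> fval f n x"
    by (simp add: field_simps)
qed

section \<open>A trap instance on an independent set\<close>

definition curved_card :: "real \<Rightarrow> nat \<Rightarrow> real" where
  "curved_card lam m = (if m = 0 then 0 else 1 + (1 - lam) * (real m - 1))"

text \<open>Shared elements \<open>Sh\<close> are worth \<open>1\<close> for the first and \<open>1 - lam\<close> for every
  further one, private elements \<open>Oh\<close> are worth \<open>1\<close> each; the total curvature is exactly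
  \<open>lam\<close>.\<close>
definition trap_fun :: "real \<Rightarrow> nat set \<Rightarrow> nat set \<Rightarrow> nat set \<Rightarrow> real" where
  "trap_fun lam Sh Oh A = curved_card lam (card (A \<inter> Sh)) + real (card (A \<inter> Oh))"

lemma curved_card_nonneg: "lam \<le> 1 \<Longrightarrow> 0 \<le> curved_card lam m"
  unfolding curved_card_def by simp

lemma marg_trap_fun:
  assumes "finite Sh" "finite Oh" "Sh \<inter> Oh = {}" "e \<notin> A"
  shows "marg (trap_fun lam Sh Oh) {e} A =
    (if e \<in> Sh then (if A \<inter> Sh = {} then 1 else 1 - lam) else if e \<in> Oh then 1 else 0)"
proof -
  have "finite (A \<inter> Sh)" "finite (A \<inter> Oh)"
    using assms(1,2) by simp_all
  then show ?thesis
    using assms by (auto simp: marg_def trap_fun_def curved_card_def Int_insert_left algebra_simps)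
qed

lemma trap_fun_singleton:
  "Sh \<inter> Oh = {} \<Longrightarrow> trap_fun lam Sh Oh {e} = (if e \<in> Sh \<union> Oh then 1 else 0)"
  by (auto simp: trap_fun_def curved_card_def Int_insert_left)

lemma in_F_trap_fun:
  assumes fin: "finite Sh" "finite Oh" and disj: "Sh \<inter> Oh = {}" and lam: "0 \<le> lam" "lam \<le> 1"
  shows "in_F lam S (trap_fun lam Sh Oh)"
proof -
  note marg = marg_trap_fun[OF fin disj, of _ _ lam]
  have antimono: "marg (trap_fun lam Sh Oh) {e} B \<le> marg (trap_fun lam Sh Oh) {e} A"
    if "A \<subseteq> B" "e \<notin> B" for e A B
  proof -
    have "e \<notin> A"
      using that by blast
    then show ?thesis
      using that lam marg[of e A] marg[of e B] by auto
  qed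
  have nonneg_marg: "0 \<le> marg (trap_fun lam Sh Oh) {e} A" for e A
    using lam marg[of e A] by (cases "e \<in> A") (auto simp: marg_singleton_mem)
  have curvature: "(1 - lam) * trap_fun lam Sh Oh {e} \<le> marg (trap_fun lam Sh Oh) {e} A"
    if "e \<notin> A" for e A
    using that lam marg[of e A] trap_fun_singleton[OF disj] by auto
  have nonneg: "0 \<le> trap_fun lam Sh Oh A" for A
    unfolding trap_fun_def using curved_card_nonneg[OF lam(2)] by simp
  have empty: "trap_fun lam Sh Oh {} = 0"
    by (simp add: trap_fun_def curved_card_def)
  show ?thesis
    unfolding in_F_def
    by (intro conjI allI impI nonneg empty nonneg_marg antimono curvature) auto
qed

text \<open>Agent \<open>i \<in> I\<close> chooses between the shared element \<open>2 * i\<close> and its private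
  element \<open>2 * i + 1\<close>; every other agent only has the worthless \<open>2 * i\<close>.\<close>
definition trap_blocks :: "nat set \<Rightarrow> nat \<Rightarrow> nat set" where
  "trap_blocks I i = (if i \<in> I then {2 * i, 2 * i + 1} else {2 * i})"

definition trap_value :: "real \<Rightarrow> nat set \<Rightarrow> nat set \<Rightarrow> real" where
  "trap_value lam I = trap_fun lam ((\<lambda>i. 2 * i) ` I) ((\<lambda>i. 2 * i + 1) ` I)"

lemma trap_evens_odds_disjoint: "(\<lambda>i. 2 * i) ` I \<inter> (\<lambda>i::nat. 2 * i + 1) ` J = {}"
  by auto presburger

lemma in_F_trap_value: "finite I \<Longrightarrow> 0 \<le> lam \<Longrightarrow> lam \<le> 1 \<Longrightarrow> in_F lam S (trap_value lam I)"
  unfolding trap_value_def by (intro in_F_trap_fun trap_evens_odds_disjoint) simp_all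

lemma is_partition_trap_blocks: "is_partition n (\<Union>i\<in>{1..n}. trap_blocks I i) (trap_blocks I)"
  unfolding is_partition_def trap_blocks_def by auto

lemma finite_trap_ground: "finite (\<Union>i\<in>{1..n}. trap_blocks I i)"
  unfolding trap_blocks_def by simp

lemma opt_val_trap_ge:
  assumes I: "I \<subseteq> {1..n}"
  shows "real (card I) \<le> opt_val n (trap_value lam I) (trap_blocks I)"
proof -
  define p where "p = restrict (\<lambda>i. if i \<in> I then 2 * i + 1 else 2 * i) {1..n}"
  have p: "p \<in> profiles n (trap_blocks I)"
    unfolding p_def profiles_def trap_blocks_def by simp
  have "p ` {1..n} \<inter> (\<lambda>i. 2 * i) ` I = {}"
    unfolding p_def by auto presburger
  moreover have "p ` {1..n} \<inter> (\<lambda>i. 2 * i + 1) ` I = (\<lambda>i. 2 * i + 1) ` I"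
    using I unfolding p_def by force
  moreover have "card ((\<lambda>i::nat. 2 * i + 1) ` I) = card I"
    by (intro card_image inj_onI) simp
  ultimately have "fval (trap_value lam I) n p = real (card I)"
    unfolding fval_def trap_value_def trap_fun_def curved_card_def by simp
  then show ?thesis
    using fval_le_opt_val[OF finite_trap_ground is_partition_trap_blocks p, of "trap_value lam I"] by simp
qed

text \<open>No agent of the independent set \<open>I\<close> sees another one, so the shared element
  \<open>2 * i\<close> looks as valuable as the private \<open>2 * i + 1\<close>, and the greedy agents may all
  pick the shared one.\<close>
lemma trap_greedy_outcome:
  assumes I: "I \<subseteq> {1..n}" and E: "is_graph n E" and indep: "\<forall>i\<in>I. \<forall>j\<in>I. \<not> E i j"
  shows "restrict (\<lambda>i. 2 * i) {1..n} \<in> greedy_outcomes n (trap_value lam I) (trap_blocks I) E"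
proof -
  let ?x = "restrict (\<lambda>i. 2 * i) {1..n}"
  have fin: "finite ((\<lambda>i. 2 * i) ` I)" "finite ((\<lambda>i. 2 * i + 1) ` I)"
    using finite_subset[OF I] by simp_all
  have "marg (trap_value lam I) {y} (?x ` nbrs E i) \<le> marg (trap_value lam I) {?x i} (?x ` nbrs E i)"
    if i: "i \<in> {1..n}" and y: "y \<in> trap_blocks I i" for i y
  proof (cases "i \<in> I")
    case False
    then show ?thesis
      using i y by (simp add: trap_blocks_def)
  next
    case True
    have seen: "?x ` nbrs E i = (\<lambda>j. 2 * j) ` nbrs E i" "nbrs E i \<subseteq> {..<i} - I"
      using E indep True unfolding nbrs_def is_graph_def by auto
    then have unshared: "?x ` nbrs E i \<inter> (\<lambda>i. 2 * i) ` I = {}"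
      by auto
    have "marg (trap_value lam I) {z} (?x ` nbrs E i) = 1" if z: "z \<in> {2 * i, 2 * i + 1}" for z
    proof -
      have "z \<notin> ?x ` nbrs E i"
        using z seen by auto
      moreover have "z \<in> (\<lambda>i. 2 * i) ` I \<union> (\<lambda>i. 2 * i + 1) ` I"
        using z True by blast
      ultimately show ?thesis
        using unshared marg_trap_fun[OF fin trap_evens_odds_disjoint, of z "?x ` nbrs E i" lam]
        unfolding trap_value_def by auto
    qed
    moreover have "y \<in> {2 * i, 2 * i + 1}" "?x i \<in> {2 * i, 2 * i + 1}"
      using True i y by (simp_all add: trap_blocks_def)
    ultimately show ?thesis
      by simp
  qed
  moreover have "?x \<in> profiles n (trap_blocks I)"
    unfolding profiles_def trap_blocks_def by simp
  ultimately show ?thesis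
    unfolding greedy_outcomes_def by blast
qed

lemma fval_trap_greedy:
  assumes "I \<subseteq> {1..n}"
  shows "fval (trap_value lam I) n (restrict (\<lambda>i. 2 * i) {1..n}) = curved_card lam (card I)"
proof -
  have "restrict (\<lambda>i. 2 * i) {1..n} ` {1..n} \<inter> (\<lambda>i. 2 * i) ` I = (\<lambda>i. 2 * i) ` I"
    using assms by auto
  moreover have "restrict (\<lambda>i. 2 * i) {1..n} ` {1..n} \<inter> (\<lambda>i::nat. 2 * i + 1) ` I = {}"
    by auto presburger
  moreover have "card ((\<lambda>i::nat. 2 * i) ` I) = card I"
    by (intro card_image inj_onI) simp
  ultimately show ?thesis
    unfolding fval_def trap_value_def trap_fun_def by simp
qed

lemma gamma_lam_le_independent:
  assumes E: "is_graph n E" and I: "I \<subseteq> {1..n}" "I \<noteq> {}" and indep: "\<forall>i\<in>I. \<forall>j\<in>I. \<not> E i j"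
    and lam: "0 \<le> lam" "lam \<le> 1"
  shows "gamma_lam lam n E \<le> (real (card I) - (real (card I) - 1) * lam) / real (card I)"
proof -
  let ?S = "\<Union>i\<in>{1..n}. trap_blocks I i" and ?f = "trap_value lam I" and ?X = "trap_blocks I"
  have card: "0 < card I"
    using I finite_subset[OF I(1)] by (simp add: card_gt_0_iff)
  have F: "in_F lam ?S ?f"
    using finite_subset[OF I(1)] lam by (intro in_F_trap_value) simp_all
  have opt: "real (card I) \<le> opt_val n ?f ?X"
    using opt_val_trap_ge[OF I(1)] .
  with card have opt_pos: "0 < opt_val n ?f ?X"
    by linarith
  have "gamma_lam lam n E \<le> gamma n ?f ?X E"
    by (rule gamma_lam_le[OF finite_trap_ground F is_partition_trap_blocks opt_pos])
  also have "\<dots> \<le> curved_card lam (card I) / opt_val n ?f ?X"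
    using gamma_le[OF finite_trap_ground F is_partition_trap_blocks opt_pos
        trap_greedy_outcome[OF I(1) E indep]] fval_trap_greedy[OF I(1)] by simp
  also have "\<dots> \<le> curved_card lam (card I) / real (card I)"
    using opt card curved_card_nonneg[OF lam(2)] by (intro divide_left_mono) auto
  finally show ?thesis
    using card by (simp add: curved_card_def algebra_simps)
qed

lemma instance_exists:
  assumes "1 \<le> n" "0 \<le> lam" "lam \<le> 1"
  obtains S f X where "finite S" "in_F lam S f" "is_partition n S X" "0 < opt_val n f X"
proof
  show "0 < opt_val n (trap_value lam {1..n}) (trap_blocks {1..n})"
    using opt_val_trap_ge[of "{1..n}" n lam] assms(1) by simp
  show "in_F lam (\<Union>i\<in>{1..n}. trap_blocks {1..n} i) (trap_value lam {1..n})"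
    using assms(2,3) by (intro in_F_trap_value) simp_all
qed (rule finite_trap_ground is_partition_trap_blocks)+

section \<open>Depth of a graph\<close>

text \<open>The defining equation of \<open>Pbar\<close> would be unfolded indefinitely by the simplifier.\<close>
declare Pbar.simps [simp del]

lemma Pbar_nbrs: "Pbar E i = (if nbrs E i = {} then 1 else 1 + Max (Pbar E ` nbrs E i))"
  unfolding nbrs_def by (rule Pbar.simps)

lemma finite_nbrs: "finite (nbrs E i)"
  unfolding nbrs_def by simp

lemma Pbar_ge_1: "1 \<le> Pbar E i"
  by (subst Pbar_nbrs) simp

lemma Pbar_less:
  assumes "j < i" "E j i"
  shows "Pbar E j < Pbar E i"
proof -
  have j: "j \<in> nbrs E i"
    using assms unfolding nbrs_def by simp
  then have "Pbar E j \<le> Max (Pbar E ` nbrs E i)"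
    using finite_nbrs by simp
  then show ?thesis
    using j by (subst (2) Pbar_nbrs) auto
qed

lemma Pbar_eq_imp_not_adjacent:
  assumes "is_graph n E" "Pbar E i = Pbar E j"
  shows "\<not> E i j"
proof
  assume ij: "E i j"
  then have "E j i" and "i \<noteq> j"
    using assms(1) unfolding is_graph_def by blast+
  then show False
    using ij assms(2) Pbar_less[of i j E] Pbar_less[of j i E] by (cases "i < j") auto
qed

text \<open>The depth levels partition \<open>[n]\<close> into at most \<open>q\<close> independent sets, so by
  pigeonhole one of them has more than \<open>m\<close> elements.\<close>
lemma graphs_nq_independent_set:
  assumes E: "E \<in> graphs_nq n q" and n: "q * m < n"
  obtains I where "I \<subseteq> {1..n}" "card I = Suc m" "\<forall>i\<in>I. \<forall>j\<in>I. \<not> E i j"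
proof -
  define L where "L p = {i \<in> {1..n}. Pbar E i = p}" for p
  have cover: "{1..n} = (\<Union>p\<in>{1..q}. L p)"
    using E Pbar_ge_1[of E] unfolding graphs_nq_def L_def by fastforce
  have "n = card (\<Union>p\<in>{1..q}. L p)"
    unfolding cover[symmetric] by simp
  also have "\<dots> \<le> (\<Sum>p\<in>{1..q}. card (L p))"
    by (rule card_UN_le) simp
  finally have "n \<le> (\<Sum>p\<in>{1..q}. card (L p))" .
  moreover have "(\<Sum>p\<in>{1..q}. card (L p)) \<le> q * m" if "\<forall>p\<in>{1..q}. card (L p) \<le> m"
    using that sum_bounded_above[of "{1..q}" "\<lambda>p. card (L p)" m] by simp
  ultimately obtain p where "Suc m \<le> card (L p)"
    using n not_less_eq_eq by fastforce
  then obtain I where I: "I \<subseteq> L p" "card I = Suc m"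
    using obtain_subset_with_card_n by metis
  have "is_graph n E"
    using E unfolding graphs_nq_def by blast
  then have "\<forall>i\<in>I. \<forall>j\<in>I. \<not> E i j"
    using I(1) Pbar_eq_imp_not_adjacent unfolding L_def by (metis (mono_tags, lifting) mem_Collect_eq subsetD)
  moreover have "I \<subseteq> {1..n}"
    using I(1) unfolding L_def by blast
  ultimately show ?thesis
    using that I(2) by blast
qed

lemma Pbar_residue_graph:
  assumes r: "1 \<le> r"
  shows "i \<in> {1..n} \<Longrightarrow> Pbar (residue_graph n r) i = (i - 1) div r + 1"
proof (induction i rule: less_induct)
  case (less i)
  then have "1 \<le> i"
    by simp
  let ?G = "residue_graph n r"
  have nbrs: "nbrs ?G i = {j. 1 \<le> j \<and> j < i \<and> j mod r = i mod r}"
    using less.prems by (rule nbrs_residue_graph)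
  show ?case
  proof (cases "i \<le> r")
    case True
    have "nbrs ?G i = {}"
    proof (intro equals0I)
      fix j
      assume "j \<in> nbrs ?G i"
      then have "1 \<le> j" "j < i" "j mod r = i mod r"
        unfolding nbrs by auto
      moreover have "i mod r = (if i = r then 0 else i)"
        using True by auto
      ultimately show False
        using True by (auto split: if_splits)
    qed
    moreover have "(i - 1) div r = 0"
      using True \<open>1 \<le> i\<close> by (intro div_less) arith
    ultimately show ?thesis
      by (subst Pbar_nbrs) simp
  next
    case False
    have below: "j \<le> i - r" if "j \<in> nbrs ?G i" for j
    proof -
      have "j < i" "r dvd i - j"
        using that mod_eq_dvd_iff_nat[of j i r] unfolding nbrs by auto
      then show ?thesis
        using dvd_imp_le[of r "i - j"] by auto
    qed
    have top: "i - r \<in> nbrs ?G i"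
      using False r le_mod_geq[of r i] unfolding nbrs by auto
    have IH: "Pbar ?G j = (j - 1) div r + 1" if "j \<in> nbrs ?G i" for j
      using that less.IH less.prems unfolding nbrs by auto
    have "Max (Pbar ?G ` nbrs ?G i) = Pbar ?G (i - r)"
    proof (rule Max_eqI)
      fix k
      assume "k \<in> Pbar ?G ` nbrs ?G i"
      then obtain j where j: "j \<in> nbrs ?G i" and k: "k = Pbar ?G j"
        by blast
      have "(j - 1) div r \<le> (i - r - 1) div r"
        using below[OF j] by (intro div_le_mono diff_le_mono)
      then show "k \<le> Pbar ?G (i - r)"
        unfolding k IH[OF j] IH[OF top] by simp
    next
      show "finite (Pbar ?G ` nbrs ?G i)"
        using finite_nbrs by blast
      show "Pbar ?G (i - r) \<in> Pbar ?G ` nbrs ?G i"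
        using top by blast
    qed
    also have "\<dots> = (i - 1) div r"
      using IH[OF top] False r le_div_geq[of r "i - 1"] by (simp add: diff_commute)
    finally show ?thesis
      using top by (subst Pbar_nbrs) auto
  qed
qed

lemma ceiling_divide_nat:
  assumes "1 \<le> r" "1 \<le> i"
  shows "real_of_int \<lceil>real i / real r\<rceil> = real ((i - 1) div r + 1)"
proof -
  define d where "d = (i - 1) div r"
  define s where "s = (i - 1) mod r"
  have "i = r * d + s + 1"
    using assms unfolding d_def s_def by simp
  then have i: "real i / real r = real d + (real s + 1) / real r"
    using assms by (simp add: field_simps)
  have "s < r"
    using assms unfolding s_def by simp
  then have "0 < (real s + 1) / real r" "(real s + 1) / real r \<le> 1"
    by (simp_all add: field_simps)
  then have "\<lceil>real i / real r\<rceil> = int d + 1"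
    unfolding i by (intro ceiling_unique) auto
  then show ?thesis
    unfolding d_def by simp
qed

lemma residue_graph_in_graphs_nq:
  assumes r: "1 \<le> r" and n: "n \<le> q * r"
  shows "residue_graph n r \<in> graphs_nq n q"
proof -
  have "Pbar (residue_graph n r) i \<le> q" if i: "i \<in> {1..n}" for i
  proof -
    have "i - 1 < q * r"
      using i n by auto
    then have "(i - 1) div r < q"
      using r by (simp add: div_less_iff_less_mult mult.commute)
    then show ?thesis
      using Pbar_residue_graph[OF r i] by simp
  qed
  then show ?thesis
    unfolding graphs_nq_def using is_graph_residue_graph by blast
qed

section \<open>Bounds on \<open>eta\<close>\<close>

lemma gamma_lam_residue_graph_ge:
  assumes "1 \<le> r" "1 \<le> n" "0 \<le> lam" "lam \<le> 1"
  shows "(real r - (real r - 1) * lam) / (real r + lam) \<le> gamma_lam lam n (residue_graph n r)"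
proof -
  obtain S f X where "finite S" "in_F lam S f" "is_partition n S X" "0 < opt_val n f X"
    using instance_exists[OF assms(2-4)] .
  then show ?thesis
    by (rule gamma_lam_ge) (rule gamma_residue_graph_ge[OF assms(1,3,4)])
qed

lemma gamma_lam_graphs_nq_le:
  assumes E: "E \<in> graphs_nq n q" and r: "1 \<le> r" "q * (r - 1) < n" and lam: "0 \<le> lam" "lam \<le> 1"
  shows "gamma_lam lam n E \<le> (real r - (real r - 1) * lam) / real r"
proof -
  obtain I where I: "I \<subseteq> {1..n}" "card I = Suc (r - 1)" "\<forall>i\<in>I. \<forall>j\<in>I. \<not> E i j"
    using graphs_nq_independent_set[OF E r(2)] .
  moreover have "is_graph n E"
    using E unfolding graphs_nq_def by blast
  moreover have "card I = r"
    using I(2) r(1) by simp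
  moreover from this have "I \<noteq> {}"
    using r(1) by auto
  ultimately show ?thesis
    using gamma_lam_le_independent[OF _ I(1) _ I(3) lam] by simp
qed

lemma nat_ceiling_divide_bounds:
  fixes n q :: nat
  assumes "1 \<le> q" "q \<le> n"
  defines "r \<equiv> nat \<lceil>real n / real q\<rceil>"
  shows "1 \<le> r" and "n \<le> q * r" and "q * (r - 1) < n"
proof -
  have pos: "0 < real n / real q"
    using assms(1,2) by simp
  then have r: "real r = real_of_int \<lceil>real n / real q\<rceil>"
    unfolding r_def by simp
  show "1 \<le> r"
    using pos unfolding r_def by linarith
  have "real n / real q \<le> real r"
    using r by (simp add: le_of_int_ceiling)
  then have "real n \<le> real q * real r"
    using assms(1) by (simp add: divide_le_eq mult.commute)
  then show "n \<le> q * r"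
    by (simp flip: of_nat_mult)
  have "real r - 1 < real n / real q"
    using r ceiling_correct[of "real n / real q"] by simp
  then have "real q * (real r - 1) < real n"
    using assms(1) by (simp add: less_divide_eq mult.commute)
  moreover have "real (q * (r - 1)) = real q * (real r - 1)"
    using \<open>1 \<le> r\<close> by (simp add: of_nat_diff)
  ultimately have "real (q * (r - 1)) < real n"
    by argo
  then show "q * (r - 1) < n"
    by (simp only: of_nat_less_iff)
qed

lemma eta_le:
  assumes "graphs_nq n q \<noteq> {}" "\<And>E. E \<in> graphs_nq n q \<Longrightarrow> gamma_lam lam n E \<le> c"
  shows "eta lam n q \<le> c"
  unfolding eta_def using assms by (intro cSup_least) auto

lemma eta_ge:
  assumes "E \<in> graphs_nq n q" "\<And>E. E \<in> graphs_nq n q \<Longrightarrow> gamma_lam lam n E \<le> c"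
  shows "gamma_lam lam n E \<le> eta lam n q"
  unfolding eta_def using assms by (intro cSup_upper bdd_aboveI) auto

theorem theorem3:
  fixes n q :: nat and lam :: real
  assumes "1 \<le> q" and "q \<le> n" and "0 < lam" and "lam < 1"
  defines "r \<equiv> nat \<lceil>real n / real q\<rceil>"
  defines "G \<equiv> (\<lambda>i j. i \<in> {1..n} \<and> j \<in> {1..n} \<and> i \<noteq> j \<and> i mod r = j mod r)"
  shows "(real r - (real r - 1) * lam) / real r \<ge> eta lam n q
       \<and> eta lam n q \<ge> (real r - (real r - 1) * lam) / (real r + lam)
       \<and> G \<in> graphs_nq n q
       \<and> (\<forall>i\<in>{1..n}. real (Pbar G i) = \<lceil>real i / real r\<rceil>)
       \<and> gamma_lam lam n G \<ge> (real r - (real r - 1) * lam) / (real r + lam)"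
proof -
  have lam: "0 \<le> lam" "lam \<le> 1"
    using assms(3,4) by simp_all
  note r = nat_ceiling_divide_bounds[OF assms(1,2), folded r_def]
  have G: "G = residue_graph n r"
    unfolding G_def residue_graph_def by (intro ext) simp
  have G_in: "G \<in> graphs_nq n q"
    unfolding G using residue_graph_in_graphs_nq[OF r(1,2)] .
  have depth: "\<forall>i\<in>{1..n}. real (Pbar G i) = \<lceil>real i / real r\<rceil>"
    unfolding G using Pbar_residue_graph[OF r(1)] ceiling_divide_nat[OF r(1)] by simp
  have lower: "(real r - (real r - 1) * lam) / (real r + lam) \<le> gamma_lam lam n G"
    unfolding G using assms(1,2) by (intro gamma_lam_residue_graph_ge[OF r(1) _ lam]) simp
  have upper: "gamma_lam lam n E \<le> (real r - (real r - 1) * lam) / real r"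
    if "E \<in> graphs_nq n q" for E
    using gamma_lam_graphs_nq_le[OF that r(1,3) lam] .
  show ?thesis
    using eta_le[OF _ upper] eta_ge[OF G_in upper] G_in depth lower by fastforce
qed

end
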